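(* Let $(Y,\lambda)$ be a probability space which is divisible, and let $\{\mathcal{Y}_N\}_{N\in\mathbb{Z}}$ be a filtration of $Y$. Then there exists a collection $\{B^m_j\}$ of measurable subsets of $Y$, indexed by $m\in\{0,1,2,\dots\}$ and $1\le j\le 2^m$, such that: (1) for each $m$, $\{B^m_j:1\le j\le 2^m\}$ is a partition of $Y$ into disjoint measurable sets; (2) each $B^m_j$ is the union of precisely two sets $B^{m+1}_{j_1}$ and $B^{m+1}_{j_2}$; (3) $\lambda(B^m_j)=2^{-m}$ for all $m,j$; (4) for any filtration elements $\mathcal{Y}_M,\mathcal{Y}_N$ there exist subsets $\mathbb{N}^1,\mathbb{N}^2\subseteq\mathbb{N}$ and indices $j(m)$ ($m\in\mathbb{N}^1$), $j'(m')$ ($m'\in\mathbb{N}^2$) such that, modulo $\lambda$-null sets, $\mathcal{Y}_N\setminus\mathcal{Y}_M$ is the (empty, finite or countably infinite) union $$\mathcal{Y}_N\setminus\mathcal{Y}_M=\Big(\bigcup_{m\in\mathbb{N}^1}B^m_{j(m)}\Big)\cup\Big(\bigcup_{m'\in\mathbb{N}^2}B^{m'}_{j'(m')}\Big).$$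
   Context: A filtration of $Y$ is a family $\{\mathcal{Y}_N\}_{N\in\mathbb{Z}}$ of measurable sets with $\mathcal{Y}_N\subseteq\mathcal{Y}_{N+1}$ for all $N$. The measure space $(Y,\lambda)$ is divisible if for every measurable $S\subseteq Y$ and every $t\in[0,\lambda(S)]$ there is a measurable $S'\subseteq S$ with $\lambda(S')=t$. *)

theory Defs
  imports "HOL-Probability.Probability"
begin

definition divisible_measure :: "'a measure \<Rightarrow> bool" where
  "divisible_measure M \<longleftrightarrow>
     (\<forall>S \<in> sets M. \<forall>t::real. 0 \<le> t \<and> t \<le> measure M S \<longrightarrow>
        (\<exists>S' \<in> sets M. S' \<subseteq> S \<and> measure M S' = t))"

definition filtration_of :: "'a measure \<Rightarrow> (int \<Rightarrow> 'a set) \<Rightarrow> bool" where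
  "filtration_of M Yf \<longleftrightarrow> (\<forall>N. Yf N \<in> sets M) \<and> (\<forall>N. Yf N \<subseteq> Yf (N + 1))"

end

theory Submission
  imports Defs
begin

(* Divisibility lets one cut any measurable G into a half H that is adapted to the filtration:
   every Y_N either contains H or meets G only inside H.  To find H, locate the level N at which
   the measure of G \<inter> Y_N crosses measure G / 2 (using continuity of measure when there is no
   such level) and fill up between G \<inter> Y_(N-1) and G \<inter> Y_N.  Halving recursively yields at every
   level m a chain of sets of measures k / 2^m, each comparable with every Y_N; the blocks B^m_j
   are its successive differences.  The difference Y_N - Y_M is then the union of the maximal
   dyadic blocks lying between Y_M and Y_N, as in a Whitney decomposition of an interval: at each
   level a maximal block is adjacent to one of the two ends, and what the blocks of level m miss
   has measure at most 2 / 2^m. *)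

section \<open>Divisible measures and monotone families of sets\<close>

lemma filtration_of_mono:
  assumes "filtration_of M Y"
  shows "mono Y"
proof (rule monoI)
  fix N N' :: int
  assume "N \<le> N'"
  then show "Y N \<subseteq> Y N'"
  proof (induction N' rule: int_ge_induct)
    case (step i)
    then show ?case using assms unfolding filtration_of_def by blast
  qed simp
qed

lemma ex_int_crossing:
  fixes f :: "int \<Rightarrow> 'b::linorder"
  assumes "a \<le> b" and "f a \<le> t" and "t < f b"
  shows "\<exists>n. f n \<le> t \<and> t < f (n + 1)"
  using assms(1,3)
proof (induction b rule: int_ge_induct)
  case base
  then show ?case using assms(2) by simp
next
  case (step i)
  then show ?case by (cases "f i \<le> t") (auto simp: not_le)
qed

lemma UN_mono_int_eq_UN_nat:
  assumes "mono (A :: int \<Rightarrow> 'a set)"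
  shows "(\<Union>N. A N) = (\<Union>n. A (int n))"
proof
  show "(\<Union>N. A N) \<subseteq> (\<Union>n. A (int n))"
  proof
    fix x assume "x \<in> (\<Union>N. A N)"
    then obtain N where "x \<in> A N" by blast
    moreover have "A N \<subseteq> A (int (nat N))" using assms by (rule monoD) simp
    ultimately show "x \<in> (\<Union>n. A (int n))" by blast
  qed
qed auto

lemma INT_mono_int_eq_INT_nat:
  assumes "mono (A :: int \<Rightarrow> 'a set)"
  shows "(\<Inter>N. A N) = (\<Inter>n. A (- int n))"
proof
  show "(\<Inter>n. A (- int n)) \<subseteq> (\<Inter>N. A N)"
  proof
    fix x assume x: "x \<in> (\<Inter>n. A (- int n))"
    show "x \<in> (\<Inter>N. A N)"
    proof
      fix N
      have "A (- int (nat (- N))) \<subseteq> A N" using assms by (rule monoD) simp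
      then show "x \<in> A N" using x by blast
    qed
  qed
qed auto

context finite_measure
begin

lemma measure_UN_mono_int_le:
  assumes "mono (A :: int \<Rightarrow> 'a set)" "range A \<subseteq> sets M" "\<And>N. measure M (A N) \<le> c"
  shows "measure M (\<Union>N. A N) \<le> c"
proof -
  have "incseq (\<lambda>n. A (int n))"
    using assms(1) by (simp add: incseq_def monoD)
  then have "(\<lambda>n. measure M (A (int n))) \<longlonglongrightarrow> measure M (\<Union>n. A (int n))"
    using assms(2) by (intro finite_Lim_measure_incseq) auto
  then show ?thesis
    unfolding UN_mono_int_eq_UN_nat[OF assms(1)] by (rule LIMSEQ_le_const2) (simp add: assms(3))
qed

lemma measure_INT_mono_int_ge:
  assumes "mono (A :: int \<Rightarrow> 'a set)" "range A \<subseteq> sets M" "\<And>N. c \<le> measure M (A N)"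
  shows "c \<le> measure M (\<Inter>N. A N)"
proof -
  have "decseq (\<lambda>n. A (- int n))"
    using assms(1) by (simp add: decseq_def monoD)
  then have "(\<lambda>n. measure M (A (- int n))) \<longlonglongrightarrow> measure M (\<Inter>n. A (- int n))"
    using assms(2) by (intro finite_Lim_measure_decseq) auto
  then show ?thesis
    unfolding INT_mono_int_eq_INT_nat[OF assms(1)] by (rule LIMSEQ_le_const) (simp add: assms(3))
qed

lemma divisible_measure_obtain_between:
  assumes "divisible_measure M" "L \<in> sets M" "U \<in> sets M" "L \<subseteq> U"
    and "measure M L \<le> t" "t \<le> measure M U"
  obtains H where "H \<in> sets M" "L \<subseteq> H" "H \<subseteq> U" "measure M H = t"
proof -
  have "measure M (U - L) = measure M U - measure M L"
    using assms(3,2,4) by (rule finite_measure_Diff)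
  then have "0 \<le> t - measure M L" "t - measure M L \<le> measure M (U - L)"
    using assms(5,6) by simp_all
  moreover have "U - L \<in> sets M" using assms(2,3) by simp
  ultimately obtain S where S: "S \<in> sets M" "S \<subseteq> U - L" "measure M S = t - measure M L"
    using assms(1) unfolding divisible_measure_def by blast
  have "measure M (L \<union> S) = measure M L + measure M S"
    using S assms(2) by (intro finite_measure_Union) auto
  then show ?thesis using that[of "L \<union> S"] S assms(2,4) by auto
qed

lemma mono_int_family_obtain_gap:
  assumes "mono (A :: int \<Rightarrow> 'a set)" "range A \<subseteq> sets M" "G \<in> sets M" "\<And>N. A N \<subseteq> G"
    and "0 \<le> t" "t \<le> measure M G"
  obtains L U where "L \<in> sets M" "U \<in> sets M" "L \<subseteq> U" "U \<subseteq> G"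
    "measure M L \<le> t" "t \<le> measure M U" "\<And>N. A N \<subseteq> L \<or> U \<subseteq> A N"
proof (cases "\<forall>N. measure M (A N) \<le> t")
  case True
  show ?thesis
  proof (rule that[of "\<Union>N. A N" G])
    show "measure M (\<Union>N. A N) \<le> t"
      using True by (intro measure_UN_mono_int_le[OF assms(1,2)]) blast
  qed (use assms in auto)
next
  case not_below: False
  show ?thesis
  proof (cases "\<forall>N. t \<le> measure M (A N)")
    case True
    show ?thesis
    proof (rule that[of "{}" "\<Inter>N. A N"])
      show "t \<le> measure M (\<Inter>N. A N)"
        using True by (intro measure_INT_mono_int_ge[OF assms(1,2)]) blast
      show "(\<Inter>N. A N) \<subseteq> G" using assms(4) by blast
    qed (use assms in auto)
  next
    case False
    then obtain a b where a: "measure M (A a) \<le> t" and b: "t < measure M (A b)"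
      using not_below by (meson less_imp_le not_le)
    have "a \<le> b"
    proof (rule ccontr)
      assume "\<not> a \<le> b"
      then have "A b \<subseteq> A a" by (simp add: assms(1) monoD)
      then have "measure M (A b) \<le> measure M (A a)"
        using assms(2) by (intro finite_measure_mono) auto
      then show False using a b by simp
    qed
    then obtain n where n: "measure M (A n) \<le> t" "t < measure M (A (n + 1))"
      using ex_int_crossing[of a b "\<lambda>N. measure M (A N)" t] a b by blast
    show ?thesis
    proof (rule that[of "A n" "A (n + 1)"])
      show "A N \<subseteq> A n \<or> A (n + 1) \<subseteq> A N" for N
        using assms(1) by (cases "N \<le> n") (simp_all add: monoD)
      show "A n \<subseteq> A (n + 1)" using assms(1) by (simp add: monoD)
    qed (use assms n in auto)
  qed
qed

lemma divisible_measure_obtain_comparable_subset: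
  assumes "divisible_measure M" "mono (Y :: int \<Rightarrow> 'a set)" "range Y \<subseteq> sets M"
    and "G \<in> sets M" "0 \<le> t" "t \<le> measure M G"
  obtains H where "H \<in> sets M" "H \<subseteq> G" "measure M H = t" "\<And>N. G \<inter> Y N \<subseteq> H \<or> H \<subseteq> Y N"
proof -
  have "mono (\<lambda>N. G \<inter> Y N)" using assms(2) by (auto simp: mono_def)
  then obtain L U where LU: "L \<in> sets M" "U \<in> sets M" "L \<subseteq> U" "U \<subseteq> G"
    "measure M L \<le> t" "t \<le> measure M U" "\<And>N. G \<inter> Y N \<subseteq> L \<or> U \<subseteq> G \<inter> Y N"
    using mono_int_family_obtain_gap[of "\<lambda>N. G \<inter> Y N" G t] assms(3-6) by blast
  obtain H where "H \<in> sets M" "L \<subseteq> H" "H \<subseteq> U" "measure M H = t"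
    by (rule divisible_measure_obtain_between[OF assms(1) LU(1-3,5,6)])
  with LU show ?thesis by (intro that) blast+
qed

end

section \<open>Dyadic partitions generated by a halving operator\<close>

locale dyadic_halving = prob_space M for M :: "'a measure" +
  fixes halve :: "'a set \<Rightarrow> 'a set"
  assumes halve_sets: "G \<in> sets M \<Longrightarrow> halve G \<in> sets M"
    and halve_subset: "G \<in> sets M \<Longrightarrow> halve G \<subseteq> G"
    and measure_halve: "G \<in> sets M \<Longrightarrow> measure M (halve G) = measure M G / 2"
begin

primrec first_blocks :: "nat \<Rightarrow> nat \<Rightarrow> 'a set" where
  "first_blocks 0 k = (if k = 0 then {} else space M)"
| "first_blocks (Suc m) k = (if even k then first_blocks m (k div 2)
     else first_blocks m (k div 2) \<union> halve (first_blocks m (Suc (k div 2)) - first_blocks m (k div 2)))"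

definition block :: "nat \<Rightarrow> nat \<Rightarrow> 'a set" where
  "block m j = first_blocks m j - first_blocks m (j - 1)"

lemma first_blocks_double [simp]: "first_blocks (Suc m) (2 * i) = first_blocks m i"
  by simp

lemma first_blocks_odd: "first_blocks (Suc m) (Suc (2 * i)) = first_blocks m i \<union> halve (block m (Suc i))"
  by (simp add: block_def)

declare first_blocks.simps(2) [simp del]

lemma first_blocks_sets [measurable]: "first_blocks m k \<in> sets M"
proof (induction m arbitrary: k)
  case (Suc m)
  show ?case
  proof (cases "even k")
    case True
    then obtain i where "k = 2 * i" by blast
    then show ?thesis using Suc by simp
  next
    case False
    then obtain i where k: "k = Suc (2 * i)" by (metis oddE Suc_eq_plus1)
    have "block m (Suc i) \<in> sets M" using Suc unfolding block_def by blast
    then show ?thesis using k Suc halve_sets by (simp add: first_blocks_odd sets.Un)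
  qed
qed simp

lemma block_sets [measurable]: "block m j \<in> sets M"
  unfolding block_def by measurable

lemma first_blocks_Suc_mono: "first_blocks m k \<subseteq> first_blocks m (Suc k)"
proof (induction m arbitrary: k)
  case (Suc m)
  show ?case
  proof (cases "even k")
    case True
    then obtain i where "k = 2 * i" by blast
    then show ?thesis by (simp add: first_blocks_odd)
  next
    case False
    then obtain i where k: "k = Suc (2 * i)" by (metis oddE Suc_eq_plus1)
    have "halve (block m (Suc i)) \<subseteq> first_blocks m (Suc i)"
      using halve_subset[OF block_sets, of m "Suc i"] unfolding block_def by blast
    then show ?thesis
      using k Suc.IH[of i] first_blocks_double[of m "Suc i"] by (simp add: first_blocks_odd)
  qed
qed simp

lemma first_blocks_mono: "k \<le> k' \<Longrightarrow> first_blocks m k \<subseteq> first_blocks m k'"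
  by (rule lift_Suc_mono_le[of "first_blocks m", OF first_blocks_Suc_mono])

lemma first_blocks_zero [simp]: "first_blocks m 0 = {}"
  by (induction m) (simp_all add: first_blocks.simps(2))

lemma first_blocks_top: "2 ^ m \<le> k \<Longrightarrow> first_blocks m k = space M"
proof (induction m arbitrary: k)
  case (Suc m)
  show ?case
  proof (cases "even k")
    case True
    then obtain i where "k = 2 * i" by blast
    then show ?thesis using Suc by simp
  next
    case False
    then obtain i where k: "k = Suc (2 * i)" by (metis oddE Suc_eq_plus1)
    then have "first_blocks m i = space M" "first_blocks m (Suc i) = space M" using Suc by auto
    then show ?thesis using k halve_subset[of "{}"] by (simp add: first_blocks_odd block_def)
  qed
qed simp

lemma measure_block_eq_diff:
  "measure M (block m j) = measure M (first_blocks m j) - measure M (first_blocks m (j - 1))"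
  unfolding block_def by (rule finite_measure_Diff) (simp_all add: first_blocks_mono)

lemma measure_first_blocks: "k \<le> 2 ^ m \<Longrightarrow> measure M (first_blocks m k) = k / 2 ^ m"
proof (induction m arbitrary: k)
  case 0
  then show ?case by (cases k) (simp_all add: prob_space)
next
  case (Suc m)
  show ?case
  proof (cases "even k")
    case True
    then obtain i where "k = 2 * i" by blast
    then show ?thesis using Suc by simp
  next
    case False
    then obtain i where k: "k = Suc (2 * i)" by (metis oddE Suc_eq_plus1)
    then have i: "Suc i \<le> 2 ^ m" using Suc.prems by simp
    have "measure M (block m (Suc i)) = 1 / 2 ^ m"
      using Suc.IH[OF i] Suc.IH[of i] i by (simp add: measure_block_eq_diff diff_divide_distrib[symmetric])
    moreover have "halve (block m (Suc i)) \<subseteq> block m (Suc i)"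
      by (simp add: halve_subset)
    then have "measure M (first_blocks (Suc m) k) = measure M (first_blocks m i) + measure M (halve (block m (Suc i)))"
      unfolding k first_blocks_odd by (intro finite_measure_Union) (auto simp: halve_sets block_def)
    ultimately show ?thesis
      using Suc.IH[of i] i k by (simp add: measure_halve field_simps)
  qed
qed

lemma measure_block:
  assumes "j \<in> {1..2 ^ m}"
  shows "measure M (block m j) = 1 / 2 ^ m"
proof -
  have "measure M (block m j) = j / 2 ^ m - (j - 1) / 2 ^ m"
    using assms measure_first_blocks[of j m] measure_first_blocks[of "j - 1" m]
    by (auto simp add: measure_block_eq_diff simp del: of_nat_diff)
  then show ?thesis using assms by (simp add: of_nat_diff diff_divide_distrib[symmetric])
qed

lemma first_blocks_comparable:
  assumes "Y \<subseteq> space M" and halve_comparable: "\<And>G. G \<in> sets M \<Longrightarrow> G \<inter> Y \<subseteq> halve G \<or> halve G \<subseteq> Y"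
  shows "first_blocks m k \<subseteq> Y \<or> Y \<subseteq> first_blocks m k"
proof (induction m arbitrary: k)
  case 0
  then show ?case using assms(1) by simp
next
  case (Suc m)
  show ?case
  proof (cases "even k")
    case True
    then obtain i where "k = 2 * i" by blast
    then show ?thesis using Suc by simp
  next
    case False
    then obtain i where k: "k = Suc (2 * i)" by (metis oddE Suc_eq_plus1)
    have halve_block: "halve (block m (Suc i)) \<subseteq> block m (Suc i)"
      by (simp add: halve_subset)
    consider "first_blocks m (Suc i) \<subseteq> Y" | "Y \<subseteq> first_blocks m i"
      | "first_blocks m i \<subseteq> Y" "Y \<subseteq> first_blocks m (Suc i)"
      using Suc.IH by blast
    then show ?thesis
    proof cases
      case 1
      then show ?thesis
        using halve_block k first_blocks_Suc_mono[of m i] by (auto simp: first_blocks_odd block_def)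
    next
      case 2
      then show ?thesis using k by (auto simp: first_blocks_odd)
    next
      case 3
      then show ?thesis
        using halve_comparable[OF block_sets, of m "Suc i"] k by (auto simp: first_blocks_odd block_def)
    qed
  qed
qed

lemma block_disjoint: "1 \<le> j \<Longrightarrow> 1 \<le> k \<Longrightarrow> j \<noteq> k \<Longrightarrow> block m j \<inter> block m k = {}"
proof -
  have "block m j \<inter> block m k = {}" if "j < k" for j k
  proof -
    have "j \<le> k - 1" using that by simp
    then show ?thesis using first_blocks_mono[of j "k - 1" m] unfolding block_def by auto
  qed
  moreover assume "j \<noteq> k"
  ultimately show ?thesis by (metis Int_commute linorder_neq_iff)
qed

lemma UN_block: "(\<Union>j \<in> {1..n}. block m j) = first_blocks m n"
proof (induction n)
  case (Suc n)
  have "{1..Suc n} = insert (Suc n) {1..n}" by auto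
  then show ?case using Suc first_blocks_mono[of n "Suc n" m] unfolding block_def by auto
qed simp

lemma block_split: "1 \<le> j \<Longrightarrow> block m j = block (Suc m) (2 * j - 1) \<union> block (Suc m) (2 * j)"
proof -
  assume "1 \<le> j"
  then have "2 * j - 1 - 1 = 2 * (j - 1)" by simp
  then have lower: "first_blocks (Suc m) (2 * j - 1 - 1) = first_blocks m (j - 1)" by simp
  have "first_blocks (Suc m) (2 * j - 1 - 1) \<subseteq> first_blocks (Suc m) (2 * j - 1)"
    "first_blocks (Suc m) (2 * j - 1) \<subseteq> first_blocks (Suc m) (2 * j)"
    by (rule first_blocks_mono; simp)+
  then show ?thesis
    unfolding block_def lower[symmetric] first_blocks_double[symmetric, of m j] by blast
qed

lemma block_subset_parent: "1 \<le> j \<Longrightarrow> block (Suc m) j \<subseteq> block m ((j + 1) div 2)"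
proof -
  let ?p = "(j + 1) div 2"
  have "first_blocks (Suc m) j \<subseteq> first_blocks (Suc m) (2 * ?p)"
    "first_blocks (Suc m) (2 * (?p - 1)) \<subseteq> first_blocks (Suc m) (j - 1)"
    by (rule first_blocks_mono; simp)+
  then show ?thesis unfolding block_def by (simp only: first_blocks_double) blast
qed

subsection \<open>Whitney decomposition of a difference of comparable sets\<close>

definition inner_index :: "'a set \<Rightarrow> nat \<Rightarrow> nat" where
  "inner_index Y m = (GREATEST k. k \<le> 2 ^ m \<and> first_blocks m k \<subseteq> Y)"

definition outer_index :: "'a set \<Rightarrow> nat \<Rightarrow> nat" where
  "outer_index Y m = (LEAST k. Y \<subseteq> first_blocks m k)"

lemma inner_index:
  shows inner_index_le: "inner_index Y m \<le> 2 ^ m"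
    and first_blocks_inner_index: "first_blocks m (inner_index Y m) \<subseteq> Y"
  using GreatestI_nat[of "\<lambda>k. k \<le> 2 ^ m \<and> first_blocks m k \<subseteq> Y" 0 "2 ^ m"]
  unfolding inner_index_def by auto

lemma le_inner_index: "k \<le> 2 ^ m \<Longrightarrow> first_blocks m k \<subseteq> Y \<Longrightarrow> k \<le> inner_index Y m"
  unfolding inner_index_def by (rule Greatest_le_nat[where b = "2 ^ m"]) auto

lemma inner_index_eqI:
  assumes "k \<le> 2 ^ m" "first_blocks m k \<subseteq> Y" "\<not> first_blocks m (Suc k) \<subseteq> Y"
  shows "inner_index Y m = k"
proof -
  have "\<not> Suc k \<le> inner_index Y m"
    using assms(3) first_blocks_inner_index[of m Y] first_blocks_mono by blast
  then show ?thesis using le_inner_index[OF assms(1,2)] by simp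
qed

lemma outer_index_le: "Y \<subseteq> first_blocks m k \<Longrightarrow> outer_index Y m \<le> k"
  unfolding outer_index_def by (rule Least_le)

lemma subset_first_blocks_outer_index: "Y \<subseteq> first_blocks m k \<Longrightarrow> Y \<subseteq> first_blocks m (outer_index Y m)"
  unfolding outer_index_def by (rule LeastI)

lemma outer_index_le_pow: "Y \<subseteq> space M \<Longrightarrow> outer_index Y m \<le> 2 ^ m"
  by (rule outer_index_le) (simp add: first_blocks_top)

lemma outer_index_eqI:
  assumes "Y \<subseteq> first_blocks m (Suc k)" "\<not> Y \<subseteq> first_blocks m k"
  shows "outer_index Y m = Suc k"
proof -
  have "\<not> outer_index Y m \<le> k"
    using assms(2) subset_first_blocks_outer_index[OF assms(1)] first_blocks_mono by blast
  then show ?thesis using outer_index_le[OF assms(1)] by simp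
qed

lemma measure_diff_first_blocks_inner_index:
  assumes "Y \<in> sets M" "\<And>k. first_blocks m k \<subseteq> Y \<or> Y \<subseteq> first_blocks m k"
  shows "measure M (Y - first_blocks m (inner_index Y m)) \<le> 1 / 2 ^ m"
proof (cases "inner_index Y m = 2 ^ m")
  case True
  then have "Y - first_blocks m (inner_index Y m) = {}"
    using sets.sets_into_space[OF assms(1)] by (simp add: first_blocks_top)
  then show ?thesis unfolding \<open>Y - first_blocks m (inner_index Y m) = {}\<close> by simp
next
  case False
  then have k: "Suc (inner_index Y m) \<in> {1..2 ^ m}" using inner_index_le[of Y m] by simp
  then have "\<not> first_blocks m (Suc (inner_index Y m)) \<subseteq> Y"
    using le_inner_index[of "Suc (inner_index Y m)" m Y] by auto
  then have "Y - first_blocks m (inner_index Y m) \<subseteq> block m (Suc (inner_index Y m))"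
    using assms(2)[of "Suc (inner_index Y m)"] unfolding block_def by auto
  then have "measure M (Y - first_blocks m (inner_index Y m)) \<le> measure M (block m (Suc (inner_index Y m)))"
    using assms(1) by (intro finite_measure_mono) auto
  then show ?thesis using measure_block[OF k] by simp
qed

lemma measure_first_blocks_outer_index_diff:
  assumes "Y \<in> sets M" "\<And>k. first_blocks m k \<subseteq> Y \<or> Y \<subseteq> first_blocks m k"
  shows "measure M (first_blocks m (outer_index Y m) - Y) \<le> 1 / 2 ^ m"
proof (cases "outer_index Y m = 0")
  case True
  then show ?thesis by simp
next
  case False
  have Y: "Y \<subseteq> space M" using sets.sets_into_space[OF assms(1)] .
  then have k: "outer_index Y m \<in> {1..2 ^ m}" using False outer_index_le_pow by auto
  have "\<not> Y \<subseteq> first_blocks m (outer_index Y m - 1)"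
    using outer_index_le[of Y m "outer_index Y m - 1"] False by auto
  then have "first_blocks m (outer_index Y m) - Y \<subseteq> block m (outer_index Y m)"
    using assms(2)[of "outer_index Y m - 1"] unfolding block_def by auto
  then have "measure M (first_blocks m (outer_index Y m) - Y) \<le> measure M (block m (outer_index Y m))"
    using assms(1) by (intro finite_measure_mono) auto
  then show ?thesis using measure_block[OF k] by simp
qed

definition block_between :: "'a set \<Rightarrow> 'a set \<Rightarrow> nat \<Rightarrow> nat \<Rightarrow> bool" where
  "block_between Y1 Y2 m j \<longleftrightarrow> j \<in> {1..2 ^ m} \<and> first_blocks m j \<subseteq> Y2 \<and> Y1 \<subseteq> first_blocks m (j - 1)"

definition whitney_union :: "'a set \<Rightarrow> 'a set \<Rightarrow> 'a set" where
  "whitney_union Y1 Y2 =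
     (\<Union>m \<in> {m. block_between Y1 Y2 m (Suc (outer_index Y1 m))}. block m (Suc (outer_index Y1 m))) \<union>
     (\<Union>m \<in> {m. block_between Y1 Y2 m (inner_index Y2 m)}. block m (inner_index Y2 m))"

lemma block_between_subset: "block_between Y1 Y2 m j \<Longrightarrow> block m j \<subseteq> Y2 - Y1"
  unfolding block_between_def block_def by auto

lemma whitney_union_subset: "whitney_union Y1 Y2 \<subseteq> Y2 - Y1"
  unfolding whitney_union_def using block_between_subset by blast

(* A block between Y1 and Y2 whose parent is not between them is, at its level, either the first
   block above Y1 or the last block below Y2. *)
lemma block_between_subset_whitney_union:
  "block_between Y1 Y2 m j \<Longrightarrow> block m j \<subseteq> whitney_union Y1 Y2"
proof (induction m arbitrary: j)
  case 0
  then have "j = 1" "first_blocks 0 1 \<subseteq> Y2" unfolding block_between_def by auto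
  then have "inner_index Y2 0 = 1" using le_inner_index[of 1 0 Y2] inner_index_le[of Y2 0] by simp
  then have "0 \<in> {m. block_between Y1 Y2 m (inner_index Y2 m)}" using 0 \<open>j = 1\<close> by simp
  then have "block 0 (inner_index Y2 0) \<subseteq> whitney_union Y1 Y2"
    unfolding whitney_union_def by blast
  then show ?case using \<open>inner_index Y2 0 = 1\<close> \<open>j = 1\<close> by simp
next
  case (Suc m)
  define p where "p = (j + 1) div 2"
  have j: "j \<in> {1..2 ^ Suc m}" "first_blocks (Suc m) j \<subseteq> Y2" "Y1 \<subseteq> first_blocks (Suc m) (j - 1)"
    using Suc.prems unfolding block_between_def by auto
  then have p: "p \<in> {1..2 ^ m}" unfolding p_def by auto
  show ?case
  proof (cases "block_between Y1 Y2 m p")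
    case True
    then show ?thesis using Suc.IH block_subset_parent[of j m] j(1) unfolding p_def by auto
  next
    case parent_not_between: False
    show ?thesis
    proof (cases "even j")
      case True
      then have jp: "j = 2 * p" unfolding p_def by auto
      then have "\<not> Y1 \<subseteq> first_blocks m (p - 1)"
        using parent_not_between p j(2) unfolding block_between_def by auto
      moreover have "Suc (2 * (p - 1)) = j - 1" "2 * p - 2 = 2 * (p - 1)" using jp p by auto
      ultimately have "outer_index Y1 (Suc m) = Suc (2 * (p - 1))"
        using j(3) by (intro outer_index_eqI) auto
      then have "Suc (outer_index Y1 (Suc m)) = j" using jp p by auto
      then show ?thesis using Suc.prems unfolding whitney_union_def by blast
    next
      case False
      then have jp: "j = Suc (2 * (p - 1))" "Suc j = 2 * p" unfolding p_def using j(1) by auto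
      then have "\<not> first_blocks m p \<subseteq> Y2"
        using parent_not_between p j(3) unfolding block_between_def by auto
      then have "inner_index Y2 (Suc m) = j"
        using j jp by (intro inner_index_eqI) auto
      then show ?thesis using Suc.prems unfolding whitney_union_def by blast
    qed
  qed
qed

lemma diff_whitney_union_subset:
  assumes "Y1 \<subseteq> space M"
  shows "Y2 - Y1 - whitney_union Y1 Y2 \<subseteq>
    (Y2 - first_blocks m (inner_index Y2 m)) \<union> (first_blocks m (outer_index Y1 m) - Y1)"
proof
  fix x
  assume x: "x \<in> Y2 - Y1 - whitney_union Y1 Y2"
  show "x \<in> (Y2 - first_blocks m (inner_index Y2 m)) \<union> (first_blocks m (outer_index Y1 m) - Y1)"
  proof (rule ccontr)
    assume "\<not> ?thesis"
    then have inner: "x \<in> first_blocks m (inner_index Y2 m)"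
      and outer: "x \<notin> first_blocks m (outer_index Y1 m)"
      using x by auto
    then obtain j where j: "j \<in> {1..inner_index Y2 m}" "x \<in> block m j"
      unfolding UN_block[symmetric] by blast
    have "\<not> j \<le> outer_index Y1 m"
      using outer j(2) first_blocks_mono[of j "outer_index Y1 m" m] unfolding block_def by blast
    then have "first_blocks m (outer_index Y1 m) \<subseteq> first_blocks m (j - 1)"
      by (intro first_blocks_mono) simp
    moreover have "Y1 \<subseteq> first_blocks m (outer_index Y1 m)"
      using assms by (intro subset_first_blocks_outer_index[of _ _ "2 ^ m"]) (simp add: first_blocks_top)
    ultimately have "Y1 \<subseteq> first_blocks m (j - 1)" by blast
    moreover have "first_blocks m j \<subseteq> Y2"
      using first_blocks_mono[of j "inner_index Y2 m" m] first_blocks_inner_index[of m Y2] j(1) by auto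
    moreover have "j \<in> {1..2 ^ m}" using j(1) inner_index_le[of Y2 m] by auto
    ultimately have "block m j \<subseteq> whitney_union Y1 Y2"
      by (intro block_between_subset_whitney_union) (simp add: block_between_def)
    then show False using j(2) x by blast
  qed
qed

lemma diff_whitney_union_null:
  assumes "Y1 \<in> sets M" "Y2 \<in> sets M"
    and "\<And>m k. first_blocks m k \<subseteq> Y1 \<or> Y1 \<subseteq> first_blocks m k"
    and "\<And>m k. first_blocks m k \<subseteq> Y2 \<or> Y2 \<subseteq> first_blocks m k"
  shows "Y2 - Y1 - whitney_union Y1 Y2 \<in> null_sets M"
proof -
  have W: "whitney_union Y1 Y2 \<in> sets M"
    unfolding whitney_union_def by measurable
  have bound: "measure M (Y2 - Y1 - whitney_union Y1 Y2) \<le> 2 / 2 ^ m" for m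
  proof -
    have "measure M (Y2 - Y1 - whitney_union Y1 Y2) \<le>
        measure M ((Y2 - first_blocks m (inner_index Y2 m)) \<union> (first_blocks m (outer_index Y1 m) - Y1))"
      using diff_whitney_union_subset[OF sets.sets_into_space[OF assms(1)]] assms(1,2)
      by (intro finite_measure_mono) auto
    also have "\<dots> \<le> measure M (Y2 - first_blocks m (inner_index Y2 m)) + measure M (first_blocks m (outer_index Y1 m) - Y1)"
      using assms(1,2) by (intro measure_Un_le) auto
    also have "\<dots> \<le> 1 / 2 ^ m + 1 / 2 ^ m"
      using measure_diff_first_blocks_inner_index[OF assms(2,4)]
        measure_first_blocks_outer_index_diff[OF assms(1,3)] by (rule add_mono)
    finally show ?thesis by simp
  qed
  have "(\<lambda>m. 2 / 2 ^ m :: real) \<longlonglongrightarrow> 0"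
    by (rule LIMSEQ_divide_realpow_zero) simp
  then have "measure M (Y2 - Y1 - whitney_union Y1 Y2) \<le> 0"
    using bound by (intro LIMSEQ_le_const) auto
  then have "measure M (Y2 - Y1 - whitney_union Y1 Y2) = 0"
    by (intro antisym measure_nonneg)
  then show ?thesis
    using W assms(1,2) by (intro null_setsI) (simp_all add: emeasure_eq_measure)
qed

lemma whitney_decomposition:
  assumes "Y1 \<in> sets M" "Y2 \<in> sets M"
    and "\<And>m k. first_blocks m k \<subseteq> Y1 \<or> Y1 \<subseteq> first_blocks m k"
    and "\<And>m k. first_blocks m k \<subseteq> Y2 \<or> Y2 \<subseteq> first_blocks m k"
  shows "\<exists>N1 N2 j1 j2. (\<forall>m \<in> N1. j1 m \<in> {1..2 ^ m}) \<and> (\<forall>m \<in> N2. j2 m \<in> {1..2 ^ m}) \<and>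
    sym_diff (Y2 - Y1) ((\<Union>m \<in> N1. block m (j1 m)) \<union> (\<Union>m \<in> N2. block m (j2 m))) \<in> null_sets M"
proof -
  have "whitney_union Y1 Y2 - (Y2 - Y1) = {}"
    using whitney_union_subset[of Y1 Y2] by blast
  then have "sym_diff (Y2 - Y1) (whitney_union Y1 Y2) \<in> null_sets M"
    using diff_whitney_union_null[OF assms] by (simp only: Un_empty_right)
  then show ?thesis
    unfolding whitney_union_def
    by (intro exI[of _ "{m. block_between Y1 Y2 m (Suc (outer_index Y1 m))}"]
        exI[of _ "{m. block_between Y1 Y2 m (inner_index Y2 m)}"]
        exI[of _ "\<lambda>m. Suc (outer_index Y1 m)"] exI[of _ "inner_index Y2"])
      (simp add: block_between_def)
qed

end

theorem lemma3p1:
  fixes M :: "'a measure" and Yf :: "int \<Rightarrow> 'a set"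
  assumes "prob_space M"
    and "divisible_measure M"
    and "filtration_of M Yf"
  shows "\<exists>B :: nat \<Rightarrow> nat \<Rightarrow> 'a set.
    (\<forall>m. (\<forall>j \<in> {1..2^m}. B m j \<in> sets M)
       \<and> (\<forall>j \<in> {1..2^m}. \<forall>k \<in> {1..2^m}. j \<noteq> k \<longrightarrow> B m j \<inter> B m k = {})
       \<and> (\<Union>j \<in> {1..2^m}. B m j) = space M)
  \<and> (\<forall>m. \<forall>j \<in> {1..2^m}. \<exists>j1 \<in> {1..2^(m+1)}. \<exists>j2 \<in> {1..2^(m+1)}.
        j1 \<noteq> j2 \<and> B m j = B (m+1) j1 \<union> B (m+1) j2)
  \<and> (\<forall>m. \<forall>j \<in> {1..2^m}. measure M (B m j) = 1 / 2^m)
  \<and> (\<forall>Mi Ni :: int. \<exists>(N1 :: nat set) (N2 :: nat set) (jj1 :: nat \<Rightarrow> nat) (jj2 :: nat \<Rightarrow> nat).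
        (\<forall>m \<in> N1. jj1 m \<in> {1..2^m}) \<and> (\<forall>m \<in> N2. jj2 m \<in> {1..2^m}) \<and>
        (let A = Yf Ni - Yf Mi;
             U = (\<Union>m \<in> N1. B m (jj1 m)) \<union> (\<Union>m \<in> N2. B m (jj2 m))
         in (A - U) \<union> (U - A) \<in> null_sets M))"
proof -
  interpret prob_space M by (fact assms(1))
  have Yf: "mono Yf" "range Yf \<subseteq> sets M"
    using assms(3) filtration_of_mono unfolding filtration_of_def by auto
  define halve where "halve G = (SOME H. H \<in> sets M \<and> H \<subseteq> G \<and> measure M H = measure M G / 2
    \<and> (\<forall>N. G \<inter> Yf N \<subseteq> H \<or> H \<subseteq> Yf N))" for G
  have halve: "halve G \<in> sets M \<and> halve G \<subseteq> G \<and> measure M (halve G) = measure M G / 2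
    \<and> (\<forall>N. G \<inter> Yf N \<subseteq> halve G \<or> halve G \<subseteq> Yf N)" if "G \<in> sets M" for G
    unfolding halve_def
    by (rule someI_ex, rule divisible_measure_obtain_comparable_subset[OF assms(2) Yf that,
          where t = "measure M G / 2"]) auto
  interpret dyadic_halving M halve
    by unfold_locales (simp_all add: halve)
  have comparable: "first_blocks m k \<subseteq> Yf N \<or> Yf N \<subseteq> first_blocks m k" for m k N
    using Yf(2) halve by (intro first_blocks_comparable) (auto dest: sets.sets_into_space)
  have children: "\<exists>j1 \<in> {1..2 ^ (m + 1)}. \<exists>j2 \<in> {1..2 ^ (m + 1)}.
      j1 \<noteq> j2 \<and> block m j = block (m + 1) j1 \<union> block (m + 1) j2" if "j \<in> {1..2 ^ m}" for m j
    using block_split[of j m] that by (intro bexI[of _ "2 * j - 1"] bexI[of _ "2 * j"]) auto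
  have "Yf N \<in> sets M" for N using Yf(2) by auto
  then show ?thesis
    using block_disjoint UN_block first_blocks_top children measure_block
      whitney_decomposition[OF _ _ comparable comparable]
    by (intro exI[of _ block]) (auto simp: Let_def)
qed

end
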